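(* Let $V_0$ be a nonlocal vertex algebra over $\mathbb{C}$ and let $W_0$ be a simple $V_0$-module. Regard $V=V_0[[\hbar]]$ as an $\hbar$-adic nonlocal vertex algebra and $W=W_0[[\hbar]]$ as a $V$-module (by $\hbar$-linear extension). Then $W$ is a simple $V$-module.
   Context: Let $\hbar$ be a formal variable. A $\mathbb{C}[[\hbar]]$-module is topologically free if it is of the form $W_0[[\hbar]]$ for a complex vector space $W_0$. An ordinary nonlocal vertex algebra $V_0$ (resp. a $V_0$-module $W_0$) makes $V_0[[\hbar]]$ an $\hbar$-adic nonlocal vertex algebra (resp. $W_0[[\hbar]]$ a module over it) by extending the vertex operators $\mathbb{C}[[\hbar]]$-linearly and $\hbar$-adically continuously. For a $\mathbb{C}[[\hbar]]$-submodule $U$ of a topologically free module $W$, set $[U]=\{w\in W:\hbar^n w\in U\text{ for some }n\ge 1\}$ and let $\overline{U}$ be the closure of $U$ in the $\hbar$-adic topology. Convention: a submodule of a module $W$ over an $\hbar$-adic nonlocal vertex algebra $V$ is a $\mathbb{C}[[\hbar]]$-submodule $W_1$ stable under all operators $u_n$ ($u\in V$, $n\in\mathbb{Z}$, where $Y_W(u,z)=\sum_n u_nz^{-n-1}$) such that $\overline{W_1}=W_1$ and $[W_1]=W_1$. A module $W$ is simple if $W\neq 0$ and its only submodules are $0$ and $W$. *)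

theory Defs
  imports Complex_Main "HOL-Library.Groups_Big_Fun" "HOL-Computational_Algebra.Formal_Power_Series"
begin

text \<open>Vertex operators are encoded by their modes: Y u n w is the coefficient
  u_n w in Y(u,z)w = sum_n u_n w z^(-n-1).\<close>

text \<open>Weak associativity, written coefficientwise: for all u, v, w there is l >= 0 with
  (z0+z2)^l Y_W(u,z0+z2) Y_W(v,z2) w = (z0+z2)^l Y_W(Y(u,z0)v,z2) w.
  The coefficient of z0^(-m-1) z2^(-n-1) on the left is
  sum_(i>=0) binom(i-m-1,i) u_(l+m-i) v_(n+i) w, on the right
  sum_(t=0..l) binom(l,t) (u_(m+l-t) v)_(n+t) w.\<close>
definition weak_assoc ::
  "(complex \<Rightarrow> 'w::ab_group_add \<Rightarrow> 'w) \<Rightarrow> ('v \<Rightarrow> int \<Rightarrow> 'v \<Rightarrow> 'v) \<Rightarrow> ('v \<Rightarrow> int \<Rightarrow> 'w \<Rightarrow> 'w) \<Rightarrow> bool"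
  where "weak_assoc scW Y YW \<longleftrightarrow>
    (\<forall>u v w. \<exists>l::nat. \<forall>m n::int.
       Sum_any (\<lambda>i::nat. scW ((of_int (int i - m - 1) :: complex) gchoose i)
                          (YW u (int l + m - int i) (YW v (n + int i) w)))
     = (\<Sum>t\<le>l. scW (of_nat (l choose t)) (YW (Y u (m + int l - int t) v) (n + int t) w)))"

definition nlva ::
  "(complex \<Rightarrow> 'v::ab_group_add \<Rightarrow> 'v) \<Rightarrow> 'v \<Rightarrow> ('v \<Rightarrow> int \<Rightarrow> 'v \<Rightarrow> 'v) \<Rightarrow> bool"
  where "nlva sc vac Y \<longleftrightarrow>
    vector_space sc \<and>
    (\<forall>u n. Vector_Spaces.linear sc sc (Y u n)) \<and>
    (\<forall>n w. Vector_Spaces.linear sc sc (\<lambda>u. Y u n w)) \<and>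
    (\<forall>u w. \<exists>N. \<forall>n\<ge>N. Y u n w = 0) \<and>
    (\<forall>n w. Y vac n w = (if n = -1 then w else 0)) \<and>
    (\<forall>u. (\<forall>n\<ge>0. Y u n vac = 0) \<and> Y u (-1) vac = u) \<and>
    weak_assoc sc Y Y"

definition nlva_module ::
  "(complex \<Rightarrow> 'v::ab_group_add \<Rightarrow> 'v) \<Rightarrow> 'v \<Rightarrow> ('v \<Rightarrow> int \<Rightarrow> 'v \<Rightarrow> 'v)
   \<Rightarrow> (complex \<Rightarrow> 'w::ab_group_add \<Rightarrow> 'w) \<Rightarrow> ('v \<Rightarrow> int \<Rightarrow> 'w \<Rightarrow> 'w) \<Rightarrow> bool"
  where "nlva_module sc vac Y scW YW \<longleftrightarrow>
    vector_space scW \<and>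
    (\<forall>u n. Vector_Spaces.linear scW scW (YW u n)) \<and>
    (\<forall>n w. Vector_Spaces.linear sc scW (\<lambda>u. YW u n w)) \<and>
    (\<forall>u w. \<exists>N. \<forall>n\<ge>N. YW u n w = 0) \<and>
    (\<forall>n w. YW vac n w = (if n = -1 then w else 0)) \<and>
    weak_assoc scW Y YW"

definition simple_module ::
  "(complex \<Rightarrow> 'w::ab_group_add \<Rightarrow> 'w) \<Rightarrow> ('v \<Rightarrow> int \<Rightarrow> 'w \<Rightarrow> 'w) \<Rightarrow> bool"
  where "simple_module scW YW \<longleftrightarrow>
    (\<exists>w::'w. w \<noteq> 0) \<and>
    (\<forall>S. module.subspace scW S \<and> (\<forall>u n w. w \<in> S \<longrightarrow> YW u n w \<in> S)
         \<longrightarrow> S = {0} \<or> S = UNIV)"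

text \<open>h-adic setting.  An element of W0[[h]] is its coefficient sequence nat => 'w.\<close>

definition hscale :: "(complex \<Rightarrow> 'w::ab_group_add \<Rightarrow> 'w) \<Rightarrow> complex fps \<Rightarrow> (nat \<Rightarrow> 'w) \<Rightarrow> (nat \<Rightarrow> 'w)"
  where "hscale scW a f = (\<lambda>k. \<Sum>i\<le>k. scW (fps_nth a i) (f (k - i)))"

text \<open>h-linear, h-adically continuous extension of the modes: u in V0[[h]] acting on W0[[h]].\<close>
definition hext :: "('v \<Rightarrow> int \<Rightarrow> 'w::ab_group_add \<Rightarrow> 'w) \<Rightarrow> (nat \<Rightarrow> 'v) \<Rightarrow> int \<Rightarrow> (nat \<Rightarrow> 'w) \<Rightarrow> (nat \<Rightarrow> 'w)"
  where "hext YW u n f = (\<lambda>k. \<Sum>i\<le>k. YW (u i) n (f (k - i)))"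

definition hpow :: "nat \<Rightarrow> (nat \<Rightarrow> 'w::zero) \<Rightarrow> (nat \<Rightarrow> 'w)"
  where "hpow n f = (\<lambda>k. if k < n then 0 else f (k - n))"

definition hsat :: "(nat \<Rightarrow> 'w::zero) set \<Rightarrow> (nat \<Rightarrow> 'w) set"
  where "hsat U = {f. \<exists>n\<ge>1. hpow n f \<in> U}"

text \<open>Closure in the h-adic topology (basic neighbourhoods f + h^k W).\<close>
definition hclosure :: "(nat \<Rightarrow> 'w) set \<Rightarrow> (nat \<Rightarrow> 'w) set"
  where "hclosure U = {f. \<forall>k. \<exists>g\<in>U. \<forall>i<k. g i = f i}"

definition hsubmodule ::
  "(complex \<Rightarrow> 'w::ab_group_add \<Rightarrow> 'w) \<Rightarrow> ('v \<Rightarrow> int \<Rightarrow> 'w \<Rightarrow> 'w) \<Rightarrow> (nat \<Rightarrow> 'w) set \<Rightarrow> bool"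
  where "hsubmodule scW YW S \<longleftrightarrow>
    (\<lambda>k. 0) \<in> S \<and>
    (\<forall>f\<in>S. \<forall>g\<in>S. (\<lambda>k. f k + g k) \<in> S) \<and>
    (\<forall>a. \<forall>f\<in>S. hscale scW a f \<in> S) \<and>
    (\<forall>u n f. f \<in> S \<longrightarrow> hext YW u n f \<in> S) \<and>
    hclosure S = S \<and> hsat S = S"

definition hsimple ::
  "(complex \<Rightarrow> 'w::ab_group_add \<Rightarrow> 'w) \<Rightarrow> ('v \<Rightarrow> int \<Rightarrow> 'w \<Rightarrow> 'w) \<Rightarrow> bool"
  where "hsimple scW YW \<longleftrightarrow>
    (\<exists>f::nat \<Rightarrow> 'w. f \<noteq> (\<lambda>k. 0)) \<and>
    (\<forall>S. hsubmodule scW YW S \<longrightarrow> S = {\<lambda>k. 0} \<or> S = UNIV)"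

end

theory Submission
  imports Defs
begin

text \<open>A submodule S of W0[[h]] is determined by the subspace of constant terms of its
  elements, which is a V0-submodule of W0 and hence 0 or W0.  If it is 0, saturation lets
  one divide every element of S by h repeatedly, so all coefficients vanish.  If it is W0,
  any g can be matched to arbitrary h-adic order by adding elements h^k f of S, and
  closedness puts g into S.  Beyond simplicity, only the vector space structure of W0
  is used.\<close>

definition const_terms :: "(nat \<Rightarrow> 'w) set \<Rightarrow> 'w set"
  where "const_terms S = (\<lambda>f. f 0) ` S"

lemma hscale_fps_X_power:
  assumes "vector_space scW"
  shows "hscale scW (fps_X ^ k) f = hpow k f"
proof
  fix j
  interpret vector_space scW by (rule assms)
  have "hscale scW (fps_X ^ k) f j = (\<Sum>i\<le>j. if i = k then f (j - i) else 0)"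
    unfolding hscale_def by (intro sum.cong) auto
  also have "\<dots> = (if k \<le> j then f (j - k) else 0)" by (simp add: sum.delta)
  also have "\<dots> = hpow k f j" by (simp add: hpow_def)
  finally show "hscale scW (fps_X ^ k) f j = hpow k f j" .
qed

lemma const_terms_hsubmodule:
  assumes "vector_space scW" and "hsubmodule scW YW S"
  shows "module.subspace scW (const_terms S)"
    and "\<And>u n w. w \<in> const_terms S \<Longrightarrow> YW u n w \<in> const_terms S"
proof -
  interpret vector_space scW by (rule assms(1))
  have zero: "(\<lambda>k. 0) \<in> S"
    and add: "\<And>f g. f \<in> S \<Longrightarrow> g \<in> S \<Longrightarrow> (\<lambda>k. f k + g k) \<in> S"
    and scale: "\<And>a f. f \<in> S \<Longrightarrow> hscale scW a f \<in> S"
    and modes: "\<And>u n f. f \<in> S \<Longrightarrow> hext YW u n f \<in> S"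
    using assms(2) unfolding hsubmodule_def by blast+
  show "module.subspace scW (const_terms S)"
    unfolding module.subspace_def[OF module_axioms]
  proof (intro conjI ballI allI)
    show "0 \<in> const_terms S" unfolding const_terms_def using zero by force
  next
    fix x y assume "x \<in> const_terms S" "y \<in> const_terms S"
    then obtain f g where "f \<in> S" "g \<in> S" "x = f 0" "y = g 0"
      unfolding const_terms_def by auto
    then show "x + y \<in> const_terms S" unfolding const_terms_def using add by force
  next
    fix c x assume "x \<in> const_terms S"
    then obtain f where "f \<in> S" "x = f 0" unfolding const_terms_def by auto
    moreover have "hscale scW (fps_const c) f 0 = scW c (f 0)" by (simp add: hscale_def)
    ultimately show "scW c x \<in> const_terms S"
      unfolding const_terms_def using scale by (metis image_eqI)
  qed
  fix u n w assume "w \<in> const_terms S"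
  then obtain f where "f \<in> S" "w = f 0" unfolding const_terms_def by auto
  moreover have "hext YW (\<lambda>i. u) n f 0 = YW u n (f 0)" by (simp add: hext_def)
  ultimately show "YW u n w \<in> const_terms S"
    unfolding const_terms_def using modes by (metis image_eqI)
qed

lemma hsat_const_terms_zero:
  fixes S :: "(nat \<Rightarrow> 'w::zero) set"
  assumes "hsat S \<subseteq> S" and "const_terms S \<subseteq> {0}"
  shows "\<forall>f\<in>S. f k = 0"
proof (induction k)
  case 0
  then show ?case using assms(2) unfolding const_terms_def by auto
next
  case (Suc k)
  show ?case
  proof
    fix f assume f: "f \<in> S"
    then have "f 0 = 0" using assms(2) unfolding const_terms_def by auto
    then have "hpow 1 (\<lambda>j. f (Suc j)) = f" by (auto simp: hpow_def fun_eq_iff gr0_conv_Suc)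
    with f assms(1) have "(\<lambda>j. f (Suc j)) \<in> S" unfolding hsat_def by fastforce
    with Suc.IH show "f (Suc k) = 0" by auto
  qed
qed

lemma hclosure_const_terms_UNIV:
  fixes S :: "(nat \<Rightarrow> 'w::ab_group_add) set"
  assumes zero: "(\<lambda>k. 0) \<in> S"
    and add: "\<And>f g. f \<in> S \<Longrightarrow> g \<in> S \<Longrightarrow> (\<lambda>k. f k + g k) \<in> S"
    and shift: "\<And>k f. f \<in> S \<Longrightarrow> hpow k f \<in> S"
    and closed: "hclosure S \<subseteq> S"
    and const_terms: "const_terms S = UNIV"
  shows "S = UNIV"
proof -
  have approx: "\<exists>h\<in>S. \<forall>i<k. h i = g i" for g k
  proof (induction k)
    case 0
    show ?case using zero by blast
  next
    case (Suc k)
    then obtain h where h: "h \<in> S" "\<forall>i<k. h i = g i" by blast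
    have "g k - h k \<in> const_terms S" using const_terms by simp
    then obtain f where f: "f \<in> S" "f 0 = g k - h k" unfolding const_terms_def by auto
    have "(\<lambda>j. h j + hpow k f j) \<in> S" using add[OF h(1) shift[OF f(1)]] .
    moreover have "\<forall>i<Suc k. h i + hpow k f i = g i"
      using h(2) f(2) by (auto simp: hpow_def less_Suc_eq)
    ultimately show ?case by (intro bexI[where x = "\<lambda>j. h j + hpow k f j"]) simp_all
  qed
  then have "hclosure S = UNIV" unfolding hclosure_def by simp
  with closed show ?thesis by (simp add: top.extremum_uniqueI)
qed

lemma hsubmodule_trivial_or_UNIV:
  assumes "vector_space scW" and "simple_module scW YW" and "hsubmodule scW YW S"
  shows "S = {\<lambda>k. 0} \<or> S = UNIV"
proof -
  have zero: "(\<lambda>k. 0) \<in> S"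
    and add: "\<And>f g. f \<in> S \<Longrightarrow> g \<in> S \<Longrightarrow> (\<lambda>k. f k + g k) \<in> S"
    and scale: "\<And>a f. f \<in> S \<Longrightarrow> hscale scW a f \<in> S"
    and closed: "hclosure S = S" and saturated: "hsat S = S"
    using assms(3) unfolding hsubmodule_def by blast+
  have simple: "\<And>T. module.subspace scW T \<Longrightarrow> (\<forall>u n w. w \<in> T \<longrightarrow> YW u n w \<in> T)
      \<Longrightarrow> T = {0} \<or> T = UNIV"
    using assms(2) unfolding simple_module_def by blast
  have "const_terms S = {0} \<or> const_terms S = UNIV"
    by (intro simple const_terms_hsubmodule(1)[OF assms(1,3)]
        allI impI const_terms_hsubmodule(2)[OF assms(1,3)])
  then show ?thesis
  proof
    assume "const_terms S = {0}"
    then have "\<forall>f\<in>S. f k = 0" for k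
      by (intro hsat_const_terms_zero) (simp_all add: saturated)
    then have "S = {\<lambda>k. 0}" using zero by (auto simp: fun_eq_iff)
    then show ?thesis ..
  next
    assume const_terms: "const_terms S = UNIV"
    have "hpow k f \<in> S" if "f \<in> S" for k f
      using scale[OF that, of "fps_X ^ k"] by (simp only: hscale_fps_X_power[OF assms(1)])
    then have "S = UNIV"
      by (intro hclosure_const_terms_UNIV[OF zero add] const_terms) (simp_all add: closed)
    then show ?thesis ..
  qed
qed

theorem lemma3p3:
  fixes sc :: "complex \<Rightarrow> 'v::ab_group_add \<Rightarrow> 'v" and vac :: 'v
    and Y :: "'v \<Rightarrow> int \<Rightarrow> 'v \<Rightarrow> 'v"
    and scW :: "complex \<Rightarrow> 'w::ab_group_add \<Rightarrow> 'w"
    and YW :: "'v \<Rightarrow> int \<Rightarrow> 'w \<Rightarrow> 'w"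
  assumes "nlva sc vac Y"
    and "nlva_module sc vac Y scW YW"
    and "simple_module scW YW"
  shows "hsimple scW YW"
proof -
  have vs: "vector_space scW" using assms(2) by (simp add: nlva_module_def)
  obtain w :: 'w where "w \<noteq> 0" using assms(3) unfolding simple_module_def by blast
  then have "(\<lambda>k::nat. w) \<noteq> (\<lambda>k. 0)" by (metis)
  then show ?thesis
    unfolding hsimple_def using hsubmodule_trivial_or_UNIV[OF vs assms(3)] by blast
qed

end
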